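(* For every $n\ge1$, \[ F^{\mathrm{(per)}}_{2n}(2)=\frac{(2n)!}{2\,n!}\cdot\frac{3\,\Gamma(\frac n2+1)}{\Gamma(\frac{3n}{2}+1)},\qquad F^{\mathrm{(per)}}_{2n}(\tfrac12)=2^{-n-1}\,\frac{(2n)!}{2\,n!}\cdot\frac{3\,\Gamma(\frac n2+1)}{\Gamma(\frac{3n}{2}+1)} . \] In particular, for $n$ odd, $F^{\mathrm{(per)}}_{2n}(2)=\dfrac{2^{2n-1}\mathrm{AV}_n^2}{\mathrm{A}_n}$ and $F^{\mathrm{(per)}}_{2n}(\tfrac12)=\dfrac{2^{n-2}\mathrm{AV}_n^2}{\mathrm{A}_n}$.
   Context: $F^{\mathrm{(per)}}_{2n}(x) = \sum_{k=1}^n \binom{n+k-2}{k-1}\frac{(2n-1)!\,(2n-k-1)! }{(3 n-2)!\,(n-k)!}x^k$ (boundary loop generating function of the periodic Temperley–Lieb loop model at loop weight 1, size $2n$). $\mathrm{A}_n=\prod_{j=0}^{n-1}\frac{(3j+1)!}{(n+j)!}$, and $\mathrm{AV}_{2m+1}=\prod_{j=0}^{m-1}(3j+2)\frac{(6j+3)!\,(2j+1)!}{(4j+3)!\,(4j+2)!}$. *)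

theory Defs
  imports "HOL-Analysis.Analysis"
begin

text \<open>Boundary loop generating function F^(per)_{2n}(x), indexed by n (size 2n).\<close>
definition F_per :: "nat \<Rightarrow> real \<Rightarrow> real" where
  "F_per n x = (\<Sum>k=1..n. real ((n + k - 2) choose (k - 1)) *
      (fact (2*n - 1) * fact (2*n - k - 1)) / (fact (3*n - 2) * fact (n - k)) * x ^ k)"

definition A_num :: "nat \<Rightarrow> real" where
  "A_num n = (\<Prod>j<n. fact (3*j + 1) / fact (n + j))"

text \<open>AV_odd m = AV_{2m+1} = prod_{j=0}^{m-1} (3j+2) (6j+3)!(2j+1)!/((4j+3)!(4j+2)!)\<close>
definition AV_odd :: "nat \<Rightarrow> real" where
  "AV_odd m = (\<Prod>j<m. real (3*j + 2) * (fact (6*j + 3) * fact (2*j + 1)) /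
                          (fact (4*j + 3) * fact (4*j + 2)))"

end

theory Submission
  imports Defs
begin

text \<open>
  For n = N + 1 the generating function factors as F_per n x = c_N x P_N(x), where
  P_N(x) = sum_j C(N+j,N) C(2N-j,N) x^j. The coefficients are symmetric under j \<mapsto> N - j, so
  P_N(1/x) = x^(-N) P_N(x), which gives the value at 1/2 from the value at 2.
  For P_N(2), creative telescoping with an explicit Zeilberger certificate yields
  (N+1)(N+2) P_(N+2)(2) = 12(3N+2)(3N+4) P_N(2). Hence F_per n 2 satisfies a first-order
  recurrence in steps of two; the Gamma expression satisfies the same one by \<Gamma>(x+1) = x \<Gamma>(x),
  and along odd n so does 2^(2n-1) AV_n^2 / A_n. Comparing initial values finishes the proof.
\<close>

lemma Gamma_plus1_pos: "x > 0 \<Longrightarrow> Gamma (x + 1) = x * Gamma (x :: real)"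
  by (metis Gamma_plus1 nonpos_Ints_nonpos not_le)

lemma two_step_recurrence_unique:
  fixes f g :: "nat \<Rightarrow> 'a"
  assumes "f 1 = g 1" "f 2 = g 2"
    and "\<And>n. n \<ge> 1 \<Longrightarrow> f (n + 2) = \<phi> n (f n)" "\<And>n. n \<ge> 1 \<Longrightarrow> g (n + 2) = \<phi> n (g n)"
    and "n \<ge> 1"
  shows "f n = g n"
proof -
  have "f (k + 1) = g (k + 1)" for k
  proof (induction k rule: nat_induct2)
    case (step k)
    then show ?case
      using assms(3,4)[of "k + 1"] by (simp add: add_ac)
  qed (use assms(1,2) in \<open>simp_all add: numeral_2_eq_2\<close>)
  then show ?thesis
    using \<open>n \<ge> 1\<close> by (metis le_add_diff_inverse2)
qed

lemma fact_add_2: "(fact (k + 2) :: real) = (real k + 2) * (real k + 1) * fact k"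
  by (simp add: numeral_eq_Suc field_simps)

lemma fact_add_4:
  "(fact (k + 4) :: real) = (real k + 4) * (real k + 3) * (real k + 2) * (real k + 1) * fact k"
  by (simp add: numeral_eq_Suc field_simps)

section \<open>Factorisation and reflection symmetry\<close>

text \<open>For j \<le> N, loop_coeff N j = C(N+j, N) C(2N-j, N).\<close>

definition loop_coeff :: "nat \<Rightarrow> nat \<Rightarrow> real" where
  "loop_coeff N j = fact (N + j) * fact (2*N - j) / (fact j * fact N ^ 2 * fact (N - j))"

definition loop_poly :: "nat \<Rightarrow> real \<Rightarrow> real" where
  "loop_poly N x = (\<Sum>j\<le>N. loop_coeff N j * x ^ j)"

definition loop_prefactor :: "nat \<Rightarrow> real" where
  "loop_prefactor N = fact (2*N + 1) * fact N / fact (3*N + 1)"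

lemma F_per_Suc: "F_per (Suc N) x = loop_prefactor N * x * loop_poly N x"
proof -
  have "F_per (Suc N) x = (\<Sum>j\<le>N. real ((N + j) choose j) *
      (fact (2*N + 1) * fact (2*N - j)) / (fact (3*N + 1) * fact (N - j)) * x ^ Suc j)"
    unfolding F_per_def atMost_atLeast0 One_nat_def sum.shift_bounds_cl_Suc_ivl
    by (intro sum.cong) (auto simp: numeral_eq_Suc)
  also have "\<dots> = (\<Sum>j\<le>N. loop_prefactor N * x * (loop_coeff N j * x ^ j))"
  proof (intro sum.cong refl)
    fix j assume "j \<in> {..N}"
    then have binom: "real ((N + j) choose j) = fact (N + j) / (fact j * fact N)"
      by (simp add: binomial_fact)
    show "real ((N + j) choose j) * (fact (2*N + 1) * fact (2*N - j)) /
        (fact (3*N + 1) * fact (N - j)) * x ^ Suc j = loop_prefactor N * x * (loop_coeff N j * x ^ j)"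
      unfolding binom loop_prefactor_def loop_coeff_def power_Suc
      by (simp add: field_simps power2_eq_square del: fact_Suc)
  qed
  finally show ?thesis
    by (simp add: loop_poly_def sum_distrib_left)
qed

lemma loop_coeff_reflect:
  assumes "j \<le> N"
  shows "loop_coeff N (N - j) = loop_coeff N j"
proof -
  have "N + (N - j) = 2*N - j" "2*N - (N - j) = N + j" "N - (N - j) = j"
    using assms by auto
  then show ?thesis
    by (simp add: loop_coeff_def mult_ac)
qed

lemma loop_poly_inverse:
  assumes "x \<noteq> 0"
  shows "loop_poly N (inverse x) = inverse x ^ N * loop_poly N x"
proof -
  have "loop_poly N (inverse x) = (\<Sum>j\<le>N. loop_coeff N (N - j) * inverse x ^ (N - j))"
    unfolding loop_poly_def by (rule sum.reindex_bij_witness[where i = "\<lambda>j. N - j" and j = "\<lambda>j. N - j"]) auto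
  also have "\<dots> = (\<Sum>j\<le>N. inverse x ^ N * (loop_coeff N j * x ^ j))"
  proof (intro sum.cong refl)
    fix j assume "j \<in> {..N}"
    then have "inverse x ^ N = inverse x ^ (N - j) * inverse x ^ j"
      by (simp flip: power_add)
    then show "loop_coeff N (N - j) * inverse x ^ (N - j) = inverse x ^ N * (loop_coeff N j * x ^ j)"
      using \<open>j \<in> {..N}\<close> assms by (simp add: loop_coeff_reflect power_inverse field_simps)
  qed
  finally show ?thesis
    by (simp add: loop_poly_def sum_distrib_left)
qed

lemma F_per_inverse:
  assumes "n \<ge> 1"
  shows "F_per n (inverse x) = inverse x ^ (n + 1) * F_per n x"
proof (cases "x = 0")
  case False
  obtain N where "n = Suc N" using assms by (cases n) auto
  then show ?thesis
    using False by (simp add: F_per_Suc loop_poly_inverse[OF False] field_simps del: inverse_eq_divide)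
qed (simp add: F_per_def)

section \<open>Creative telescoping at x = 2\<close>

definition loop_term :: "nat \<Rightarrow> nat \<Rightarrow> real" where
  "loop_term N j = (if j \<le> N then loop_coeff N j * 2 ^ j else 0)"

lemma loop_term_shift:
  fixes j m :: nat
  defines "J \<equiv> real j" and "M \<equiv> real m"
  shows "loop_term (j + m + 2) j = loop_term (j + m) j *
    ((2*J + M + 2) * (2*J + M + 1) * ((J + 2*M + 4) * (J + 2*M + 3) * (J + 2*M + 2) * (J + 2*M + 1))) /
    ((M + 2) * (M + 1) * ((J + M + 2) * (J + M + 1))^2)"
proof -
  define a where "a = (2*J + M + 2) * (2*J + M + 1)"
  define b where "b = (J + 2*M + 4) * (J + 2*M + 3) * (J + 2*M + 2) * (J + 2*M + 1)"
  define c where "c = (J + M + 2) * (J + M + 1)"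
  define d where "d = (M + 2) * (M + 1)"
  have "c \<noteq> 0" "d \<noteq> 0"
    by (simp_all add: c_def d_def J_def M_def)
  have nat_eqs: "j + m + 2 + j = (j + m + j) + 2" "2 * (j + m + 2) - j = (2 * (j + m) - j) + 4"
       "j + m + 2 - j = (j + m - j) + 2"
    by simp_all
  have facts: "fact ((j + m + j) + 2) = a * (fact (j + m + j) :: real)"
      "fact ((2 * (j + m) - j) + 4) = b * (fact (2 * (j + m) - j) :: real)"
      "fact (j + m + 2) = c * (fact (j + m) :: real)"
      "fact ((j + m - j) + 2) = d * (fact (j + m - j) :: real)"
    unfolding fact_add_2 fact_add_4 a_def b_def c_def d_def J_def M_def by simp_all
  have "loop_term (j + m + 2) j = loop_term (j + m) j * (a * b) / (d * c^2)"
    unfolding loop_term_def loop_coeff_def nat_eqs facts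
    using \<open>c \<noteq> 0\<close> \<open>d \<noteq> 0\<close> by (simp add: field_simps power2_eq_square)
  then show ?thesis
    by (simp add: a_def b_def c_def d_def)
qed

definition cert_poly :: "real \<Rightarrow> real \<Rightarrow> real" where
  "cert_poly N j = (252 + 1190*N + 2052*N^2 + 1652*N^3 + 630*N^4 + 92*N^5)
     - (484 + 1611*N + 1899*N^2 + 948*N^3 + 170*N^4)*j + (309 + 708*N + 510*N^2 + 116*N^3)*j^2
     - (91 + 129*N + 43*N^2)*j^3 + (15 + 10*N)*j^4 - j^5"

lemma cert_poly_identity:
  fixes J M :: real
  assumes "J \<ge> 0" "M \<ge> 0" "J + 2*M > 0"
  shows "12 * (3*(J + M) + 2) * (3*(J + M) + 4)
      - (J + M + 1) * (J + M + 2) * ((2*J + M + 2) * (2*J + M + 1) *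
        ((J + 2*M + 4) * (J + 2*M + 3) * (J + 2*M + 2) * (J + 2*M + 1))) /
        ((M + 2) * (M + 1) * ((J + M + 2) * (J + M + 1))^2)
    = 2 * (2*J + M + 1) * cert_poly (J + M) (J + 1) / ((J + 2*M) * (M + 1) * (J + M + 1) * (J + M + 2))
      - J * cert_poly (J + M) J / ((M + 2) * (M + 1) * (J + M + 1) * (J + M + 2))"
proof -
  have "J + 2*M \<noteq> 0" "M + 1 \<noteq> 0" "M + 2 \<noteq> 0" "J + M + 1 \<noteq> 0" "J + M + 2 \<noteq> 0"
    using assms by linarith+
  then show ?thesis
    unfolding cert_poly_def by (simp add: divide_simps) algebra
qed

text \<open>
  Zeilberger's certificate for the sums of loop_term in steps of two in N. It is written with
  fact (N + 2 - j) so that it stays nonzero at j = N + 1, N + 2, where loop_term N j already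
  vanishes; these two boundary indices are treated separately.
\<close>

definition loop_cert :: "nat \<Rightarrow> nat \<Rightarrow> real" where
  "loop_cert N j = (if j \<le> N + 2 then
     fact (N + j) * fact (2*N - j) * 2 ^ j / (fact j * fact (N + 2 - j) * fact N ^ 2)
       * real j * cert_poly (real N) (real j) / ((real N + 1) * (real N + 2)) else 0)"

lemma loop_cert_eq_term:
  fixes j m :: nat
  defines "J \<equiv> real j" and "M \<equiv> real m"
  shows "loop_cert (j + m) j =
    loop_term (j + m) j * (J * cert_poly (J + M) J / ((M + 2) * (M + 1) * (J + M + 1) * (J + M + 2)))"
proof -
  have "fact (j + m + 2 - j) = (M + 2) * (M + 1) * (fact (j + m - j) :: real)"
    using fact_add_2[of m] by (simp add: M_def add.commute)
  moreover have "M + 2 \<noteq> 0" "M + 1 \<noteq> 0" "J + M + 1 \<noteq> 0" "J + M + 2 \<noteq> 0"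
    unfolding J_def M_def by linarith+
  ultimately show ?thesis
    unfolding loop_cert_def loop_term_def loop_coeff_def J_def M_def
    by (simp add: field_simps)
qed

lemma loop_cert_Suc_eq_term:
  fixes j m :: nat
  defines "J \<equiv> real j" and "M \<equiv> real m"
  assumes "0 < j + 2*m"
  shows "loop_cert (j + m) (Suc j) = loop_term (j + m) j *
    (2 * (2*J + M + 1) * cert_poly (J + M) (J + 1) / ((J + 2*M) * (M + 1) * (J + M + 1) * (J + M + 2)))"
proof -
  define a b c d e f where "a = 2*J + M + 1" and "b = J + 2*M" and "c = M + 1"
    and "d = J + M + 1" and "e = J + M + 2" and "f = J + 1"
  obtain k where k: "j + 2*m = Suc k"
    using assms by (cases "j + 2*m") auto
  have "b = real k + 1"
    using arg_cong[OF k, of real] unfolding b_def J_def M_def by simp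
  moreover have "2 * (j + m) - j = Suc k" "2 * (j + m) - Suc j = k"
    using k by simp_all
  ultimately have shift_down: "fact (2 * (j + m) - j) = b * (fact (2 * (j + m) - Suc j) :: real)"
    by simp
  have shift_up: "fact (j + m + Suc j) = a * (fact (j + m + j) :: real)"
      "fact (Suc j) = f * (fact j :: real)"
      "fact (j + m + 2 - Suc j) = c * (fact (j + m - j) :: real)"
    by (simp_all add: a_def c_def f_def J_def M_def add_ac)
  have reals: "real (j + m) = J + M" "real (Suc j) = f" "J + M + 1 = d" "J + M + 2 = e"
    by (simp_all add: d_def e_def f_def J_def M_def)
  have "b > 0"
    using \<open>b = real k + 1\<close> by simp
  then have "b \<noteq> 0" "c \<noteq> 0" "d \<noteq> 0" "e \<noteq> 0" "f \<noteq> 0"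
    unfolding b_def c_def d_def e_def f_def J_def M_def by linarith+
  then have "loop_cert (j + m) (Suc j) = loop_term (j + m) j * (2 * a * cert_poly (J + M) f / (b * c * d * e))"
    unfolding loop_cert_def loop_term_def loop_coeff_def shift_down shift_up reals
    by (simp add: field_simps power2_eq_square)
  then show ?thesis
    by (simp add: a_def b_def c_def d_def e_def f_def)
qed

lemma loop_term_telescoping_interior:
  assumes "j \<le> N" "N \<ge> 1"
  shows "12 * (3 * real N + 2) * (3 * real N + 4) * loop_term N j - (real N + 1) * (real N + 2) * loop_term (N + 2) j
    = loop_cert N (Suc j) - loop_cert N j"
proof -
  obtain m where N: "N = j + m"
    using assms(1) le_Suc_ex by blast
  have "0 < j + 2*m"
    using assms unfolding N by linarith
  have factor_out: "a * t - b * (t * p / q) = t * r - t * s" if "a - b * p / q = r - s" for t a b p q r s :: real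
  proof -
    have "a * t - b * (t * p / q) = t * (a - b * p / q)"
      by (simp add: algebra_simps)
    then show ?thesis
      using that by (simp add: algebra_simps)
  qed
  show ?thesis
    unfolding N loop_term_shift loop_cert_eq_term loop_cert_Suc_eq_term[OF \<open>0 < j + 2*m\<close>] of_nat_add
    by (rule factor_out, rule cert_poly_identity) (use \<open>0 < j + 2*m\<close> in auto)
qed

lemma cert_poly_plus_one: "cert_poly n (n + 1) = 2 * n * (n + 1) * (n + 2) * (2*n + 3) * (n + 7)"
  unfolding cert_poly_def by algebra

lemma cert_poly_plus_two: "cert_poly n (n + 2) = 2 * n * (n - 1) * (n + 1) * (n + 2) * (2*n + 3)"
  unfolding cert_poly_def by algebra

lemma loop_term_top_pred:
  "loop_term (N + 2) (N + 1) = (real N + 3) / 4 * loop_term (N + 2) (N + 2)"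
proof -
  define a c F H where "a = real N + 2" and "c = real N + 3"
    and "F = (fact (N + 2 + (N + 1)) :: real)" and "H = (fact (N + 1) :: real)"
  have facts: "fact (N + 2 + (N + 2)) = 2 * a * F"
      "fact (N + 2 + (N + 1)) = F"
      "fact (2 * (N + 2) - (N + 1)) = c * a * H"
      "fact (2 * (N + 2) - (N + 2)) = a * H"
      "fact (N + 2) = a * H" "fact (N + 1) = H"
      "fact (N + 2 - (N + 1)) = (1 :: real)" "fact (N + 2 - (N + 2)) = (1 :: real)"
      "(2 :: real) ^ (N + 2) = 2 * 2 ^ (N + 1)"
    by (simp_all add: a_def c_def F_def H_def numeral_eq_Suc algebra_simps)
  have "a \<noteq> 0" "H \<noteq> 0" unfolding a_def H_def by simp_all
  then show ?thesis
    unfolding loop_term_def loop_coeff_def facts c_def[symmetric]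
    by (simp add: field_simps power2_eq_square)
qed

lemma loop_cert_top:
  assumes "N \<ge> 2"
  shows "loop_cert N (N + 2) = (real N + 1) * (real N + 2) * loop_term (N + 2) (N + 2)"
proof -
  define a b c d e F G where "a = real N + 1" and "b = real N + 2" and "c = 2 * real N + 3"
    and "d = real N" and "e = real N - 1"
    and "F = (fact (N + (N + 2)) :: real)" and "G = (fact (2 * N - (N + 2)) :: real)"
  obtain k where N: "N = k + 2"
    using assms le_Suc_ex by (metis add.commute)
  have facts: "fact (N + (N + 2)) = F" "fact (2 * N - (N + 2)) = G"
      "fact (N + 2 + (N + 2)) = 2 * b * c * F"
      "fact (2 * (N + 2) - (N + 2)) = b * a * d * e * G"
      "fact (N + 2) = b * a * d * e * G"
      "fact N = d * e * G"
      "fact (N + 2 - (N + 2)) = (1 :: real)"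
    unfolding a_def b_def c_def d_def e_def F_def G_def N by (simp_all add: numeral_eq_Suc algebra_simps)
  have reals: "real N = d" "real (N + 2) = b" "d + 1 = a" "d + 2 = b"
      "cert_poly d b = 2 * d * e * a * b * c"
    unfolding a_def b_def c_def d_def e_def cert_poly_plus_two by simp_all
  have "a > 0" "b > 0" "c > 0" "d > 0" "e > 0" "G > 0"
    using assms by (simp_all add: a_def b_def c_def d_def e_def G_def)
  then show ?thesis
    unfolding loop_cert_def loop_term_def loop_coeff_def facts reals
    by (simp add: field_simps power2_eq_square)
qed

lemma loop_cert_top_pred:
  assumes "N \<ge> 1"
  shows "loop_cert N (N + 1) = (real N + 1) * (real N + 2) * (real N + 7) / 4 * loop_term (N + 2) (N + 2)"
proof -
  define a b c d F G where "a = real N + 1" and "b = real N + 2" and "c = 2 * real N + 3"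
    and "d = real N" and "F = (fact (N + (N + 1)) :: real)" and "G = (fact (2 * N - (N + 1)) :: real)"
  obtain k where N: "N = k + 1"
    using assms le_Suc_ex by (metis add.commute)
  have facts: "fact (N + (N + 1)) = F" "fact (2 * N - (N + 1)) = G"
      "fact (N + 2 + (N + 2)) = 2 * b * c * (2 * a) * F"
      "fact (2 * (N + 2) - (N + 2)) = b * a * d * G"
      "fact (N + 2) = b * a * d * G"
      "fact (N + 1) = a * d * G"
      "fact N = d * G"
      "fact (N + 2 - (N + 2)) = (1 :: real)" "fact (N + 2 - (N + 1)) = (1 :: real)"
      "(2 :: real) ^ (N + 2) = 2 * 2 ^ (N + 1)"
    unfolding a_def b_def c_def d_def F_def G_def N by (simp_all add: numeral_eq_Suc algebra_simps)
  have reals: "real N = d" "real (N + 1) = a" "d + 1 = a" "d + 2 = b"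
      "cert_poly d a = 2 * d * a * b * c * (d + 7)"
    unfolding a_def b_def c_def d_def cert_poly_plus_one by simp_all
  have "a > 0" "b > 0" "c > 0" "d > 0" "G > 0"
    using assms by (simp_all add: a_def b_def c_def d_def G_def)
  then show ?thesis
    unfolding loop_cert_def loop_term_def loop_coeff_def facts reals
    by (simp add: field_simps power2_eq_square)
qed

lemma loop_term_telescoping:
  assumes "N \<ge> 2" "j < N + 3"
  shows "12 * (3 * real N + 2) * (3 * real N + 4) * loop_term N j - (real N + 1) * (real N + 2) * loop_term (N + 2) j
    = loop_cert N (Suc j) - loop_cert N j"
proof -
  consider "j \<le> N" | "j = N + 1" | "j = N + 2"
    using assms(2) by linarith
  then show ?thesis
  proof cases
    case 1
    then show ?thesis
      by (rule loop_term_telescoping_interior) (use assms(1) in simp)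
  next
    case 2
    have "loop_term N (N + 1) = 0" and succ: "Suc (N + 1) = N + 2" and "N \<ge> 1"
      using assms(1) by (simp_all add: loop_term_def)
    then show ?thesis
      unfolding 2 succ loop_term_top_pred loop_cert_top[OF assms(1)] loop_cert_top_pred[OF \<open>N \<ge> 1\<close>]
      by (simp add: field_simps)
  next
    case 3
    have "loop_term N (N + 2) = 0" "loop_cert N (N + 3) = 0" and succ: "Suc (N + 2) = N + 3"
      by (simp_all add: loop_term_def loop_cert_def)
    then show ?thesis
      unfolding 3 succ loop_cert_top[OF assms(1)] by simp
  qed
qed

lemma loop_poly_two_eq_sum:
  assumes "N < K"
  shows "loop_poly N 2 = (\<Sum>j<K. loop_term N j)"
proof -
  have "loop_poly N 2 = (\<Sum>j\<le>N. loop_term N j)"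
    unfolding loop_poly_def loop_term_def by simp
  also have "\<dots> = (\<Sum>j<K. loop_term N j)"
    using assms by (intro sum.mono_neutral_left) (auto simp: loop_term_def)
  finally show ?thesis .
qed

lemma loop_poly_two_recurrence:
  "(real N + 1) * (real N + 2) * loop_poly (N + 2) 2 = 12 * (3 * real N + 2) * (3 * real N + 4) * loop_poly N 2"
proof (cases "N \<ge> 2")
  case True
  have "loop_poly N 2 = (\<Sum>j<N + 3. loop_term N j)" "loop_poly (N + 2) 2 = (\<Sum>j<N + 3. loop_term (N + 2) j)"
    by (simp_all add: loop_poly_two_eq_sum)
  then have "12 * (3 * real N + 2) * (3 * real N + 4) * loop_poly N 2 - (real N + 1) * (real N + 2) * loop_poly (N + 2) 2
      = (\<Sum>j<N + 3. 12 * (3 * real N + 2) * (3 * real N + 4) * loop_term N j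
                      - (real N + 1) * (real N + 2) * loop_term (N + 2) j)"
    by (simp only: sum_subtractf sum_distrib_left)
  also have "\<dots> = (\<Sum>j<N + 3. loop_cert N (Suc j) - loop_cert N j)"
    by (intro sum.cong refl loop_term_telescoping[OF True]) simp
  also have "\<dots> = 0"
    unfolding sum_lessThan_telescope by (simp add: loop_cert_def)
  finally show ?thesis
    by simp
next
  case False
  then consider "N = 0" | "N = 1"
    by linarith
  then show ?thesis
    by cases (simp_all add: loop_poly_def loop_coeff_def numeral_eq_Suc atMost_Suc)
qed

section \<open>The two-step recurrence and the closed forms\<close>

definition step_ratio :: "nat \<Rightarrow> real" where
  "step_ratio n = 16 * (2 * real n + 3) * (2 * real n + 1) / (3 * (3 * real n + 4) * (3 * real n + 2))"

lemma loop_prefactor_shift: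
  "loop_prefactor (N + 2) = loop_prefactor N *
     ((2 * real N + 5) * (2 * real N + 4) * (2 * real N + 3) * (2 * real N + 2) * ((real N + 2) * (real N + 1))) /
     ((3 * real N + 7) * (3 * real N + 6) * (3 * real N + 5) * (3 * real N + 4) * (3 * real N + 3) * (3 * real N + 2))"
proof -
  define a b c where "a = (2 * real N + 5) * (2 * real N + 4) * (2 * real N + 3) * (2 * real N + 2)"
    and "b = (real N + 2) * (real N + 1)"
    and "c = (3 * real N + 7) * (3 * real N + 6) * (3 * real N + 5) * (3 * real N + 4) * (3 * real N + 3) * (3 * real N + 2)"
  have "fact (2 * (N + 2) + 1) = a * (fact (2 * N + 1) :: real)"
    using fact_add_4[of "2 * N + 1"] by (simp add: a_def algebra_simps)
  moreover have "fact (N + 2) = b * (fact N :: real)"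
    by (simp add: b_def fact_add_2 algebra_simps)
  moreover have "fact (3 * (N + 2) + 1) = c * (fact (3 * N + 1) :: real)"
    using fact_add_2[of "3 * N + 5"] fact_add_4[of "3 * N + 1"] by (simp add: c_def algebra_simps)
  moreover have "c \<noteq> 0"
    by (simp add: c_def)
  ultimately show ?thesis
    unfolding loop_prefactor_def a_def[symmetric] b_def[symmetric] c_def[symmetric]
    by (simp add: field_simps)
qed

lemma step_ratio_Suc:
  "step_ratio (Suc N) =
    (2 * real N + 5) * (2 * real N + 4) * (2 * real N + 3) * (2 * real N + 2) * ((real N + 2) * (real N + 1)) /
      ((3 * real N + 7) * (3 * real N + 6) * (3 * real N + 5) * (3 * real N + 4) * (3 * real N + 3) * (3 * real N + 2))
    * (12 * (3 * real N + 2) * (3 * real N + 4) / ((real N + 1) * (real N + 2)))"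
  unfolding step_ratio_def by (simp add: divide_simps) algebra

lemma F_per_at_two_step:
  assumes "n \<ge> 1"
  shows "F_per (n + 2) 2 = F_per n 2 * step_ratio n"
proof -
  obtain N where n: "n = Suc N"
    using assms by (cases n) auto
  have "(real N + 1) * (real N + 2) \<noteq> 0"
    by simp
  then have recurrence: "loop_poly (N + 2) 2 =
      12 * (3 * real N + 2) * (3 * real N + 4) / ((real N + 1) * (real N + 2)) * loop_poly N 2"
    using loop_poly_two_recurrence[of N] by (simp add: eq_divide_eq ac_simps)
  have n2: "n + 2 = Suc (N + 2)"
    using n by simp
  have "p * a / b * 2 * (r * q) = p * 2 * q * (a / b * r)" for p a b r q :: real
    by (simp add: mult_ac)
  then show ?thesis
    unfolding n2 unfolding n F_per_Suc loop_prefactor_shift recurrence step_ratio_Suc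
    by simp
qed

definition gamma_closed_form :: "nat \<Rightarrow> real" where
  "gamma_closed_form n = fact (2*n) / (2 * fact n) * (3 * Gamma (real n / 2 + 1) / Gamma (3 * real n / 2 + 1))"

lemma gamma_closed_form_step:
  assumes "n \<ge> 1"
  shows "gamma_closed_form (n + 2) = gamma_closed_form n * step_ratio n"
proof -
  define a b where "a = real n / 2 + 1" and "b = 3 * real n / 2 + 1"
  have "a > 0" "b > 0" "Gamma a > 0" "Gamma b > 0"
    by (simp_all add: a_def b_def)
  have Gamma_a: "Gamma (real (n + 2) / 2 + 1) = a * Gamma a"
    using Gamma_plus1_pos[OF \<open>a > 0\<close>] by (simp add: a_def add_divide_distrib)
  have arg: "3 * real (n + 2) / 2 + 1 = ((b + 1) + 1) + 1"
    by (simp add: b_def field_simps)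
  have "Gamma (((b + 1) + 1) + 1) = (b + 2) * (b + 1) * b * Gamma b"
    using Gamma_plus1_pos[of "b + 1 + 1"] Gamma_plus1_pos[of "b + 1"] Gamma_plus1_pos[OF \<open>b > 0\<close>] \<open>b > 0\<close>
    by (simp add: algebra_simps)
  then have Gamma_b: "Gamma (3 * real (n + 2) / 2 + 1) = (b + 2) * (b + 1) * b * Gamma b"
    by (simp only: arg)
  have facts: "(fact (2 * (n + 2)) :: real) = (2 * real n + 4) * (2 * real n + 3) * (2 * real n + 2) * (2 * real n + 1) * fact (2 * n)"
      "(fact (n + 2) :: real) = (real n + 2) * (real n + 1) * fact n"
    using fact_add_4[of "2 * n"] by (simp_all add: fact_add_2 algebra_simps)
  have "2 * a = real n + 2" "2 * b = 3 * real n + 2"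
    by (simp_all add: a_def b_def)
  then show ?thesis
    using \<open>a > 0\<close> \<open>b > 0\<close> \<open>Gamma a > 0\<close> \<open>Gamma b > 0\<close>
    unfolding gamma_closed_form_def step_ratio_def Gamma_a Gamma_b facts a_def[symmetric] b_def[symmetric]
    by (simp add: divide_simps) algebra
qed

lemma gamma_closed_form_1_2: "gamma_closed_form 1 = 2" "gamma_closed_form 2 = 3"
proof -
  have Gamma_5_2: "Gamma (5/2 :: real) = 3/2 * Gamma (3/2)"
    using Gamma_plus1_pos[of "3/2"] by simp
  have "Gamma (3/2 :: real) > 0"
    by simp
  then have "Gamma (3/2 :: real) \<noteq> 0"
    by linarith
  then show "gamma_closed_form 1 = 2"
    by (simp add: gamma_closed_form_def Gamma_5_2)
  have "Gamma (4 :: real) = 6" "Gamma (2 :: real) = 1"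
    by (simp_all add: Gamma_numeral numeral_eq_Suc)
  then show "gamma_closed_form 2 = 3"
    by (simp add: gamma_closed_form_def numeral_eq_Suc)
qed

lemma F_per_at_two_1_2: "F_per 1 2 = 2" "F_per 2 2 = 3"
  by (simp_all add: F_per_def numeral_eq_Suc)

lemma F_per_at_two:
  assumes "n \<ge> 1"
  shows "F_per n 2 = gamma_closed_form n"
  by (rule two_step_recurrence_unique[where f = "\<lambda>n. F_per n 2" and \<phi> = "\<lambda>n x. x * step_ratio n",
        OF _ _ F_per_at_two_step gamma_closed_form_step assms])
    (simp_all only: F_per_at_two_1_2 gamma_closed_form_1_2)

lemma A_num_Suc: "A_num (Suc n) = A_num n * (fact (3*n + 1) * fact n / (fact (2*n) * fact (2*n + 1)))"
proof -
  define D :: "nat \<Rightarrow> real" where "D k = (\<Prod>j<k. fact (k + j))" for k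
  have A_eq: "A_num k = (\<Prod>j<k. fact (3*j + 1)) / D k" for k
    unfolding A_num_def D_def by (rule prod_dividef)
  have "fact n * D (Suc n) = (\<Prod>j<Suc (Suc n). (fact (n + j) :: real))"
    unfolding D_def by (simp only: prod.lessThan_Suc_shift) simp
  also have "\<dots> = D n * fact (2*n) * fact (2*n + 1)"
  proof -
    have "n + n = 2*n" "n + Suc n = 2*n + 1"
      by simp_all
    then show ?thesis
      unfolding D_def by (simp only: prod.lessThan_Suc)
  qed
  finally have D_Suc: "D (Suc n) = D n * fact (2*n) * fact (2*n + 1) / fact n"
    by (simp add: field_simps)
  have "D n > 0"
    unfolding D_def by (simp add: prod_pos)
  then show ?thesis
    unfolding A_eq D_Suc by (simp add: field_simps)
qed

lemma A_num_pos: "A_num n > 0"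
  unfolding A_num_def by (simp add: prod_pos)

lemma AV_odd_Suc:
  "AV_odd (Suc m) = AV_odd m * (real (3*m + 2) * (fact (6*m + 3) * fact (2*m + 1)) / (fact (4*m + 3) * fact (4*m + 2)))"
  unfolding AV_odd_def by simp

definition AV_A_quotient :: "nat \<Rightarrow> real" where
  "AV_A_quotient m = 2 ^ (2 * (2*m + 1) - 1) * (AV_odd m)^2 / A_num (2*m + 1)"

lemma AV_A_quotient_Suc: "AV_A_quotient (Suc m) = AV_A_quotient m * step_ratio (2*m + 1)"
proof -
  define x F6 F2 F4 where "x = real m" and "F6 = (fact (6*m + 3) :: real)"
    and "F2 = (fact (2*m + 1) :: real)" and "F4 = (fact (4*m + 2) :: real)"
  have nat_eqs: "3 * (2*m + 1) + 1 = Suc (6*m + 3)" "3 * Suc (2*m + 1) + 1 = 6*m + 3 + 4"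
      "2 * (2*m + 1) = 4*m + 2" "2 * (2*m + 1) + 1 = Suc (4*m + 2)" "4*m + 3 = Suc (4*m + 2)"
      "2 * Suc (2*m + 1) = 4*m + 2 + 2" "2 * Suc (2*m + 1) + 1 = Suc (4*m + 2 + 2)"
    by simp_all
  have facts: "fact (3 * (2*m + 1) + 1) = (6*x + 4) * F6"
      "fact (3 * Suc (2*m + 1) + 1) = (6*x + 7) * (6*x + 6) * (6*x + 5) * (6*x + 4) * F6"
      "fact (2 * (2*m + 1)) = F4"
      "fact (2 * (2*m + 1) + 1) = (4*x + 3) * F4"
      "fact (4*m + 3) = (4*x + 3) * F4"
      "fact (2 * Suc (2*m + 1)) = (4*x + 4) * (4*x + 3) * F4"
      "fact (2 * Suc (2*m + 1) + 1) = (4*x + 5) * (4*x + 4) * (4*x + 3) * F4"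
      "fact (Suc (2*m + 1)) = (2*x + 2) * F2"
    unfolding nat_eqs fact_Suc[of "6*m + 3"] fact_add_4[of "6*m + 3"] fact_Suc[of "4*m + 2"]
      fact_add_2[of "4*m + 2"] fact_Suc[of "4*m + 2 + 2"] fact_Suc[of "2*m + 1"]
      x_def F6_def F4_def F2_def
    by (simp_all add: algebra_simps)
  have index: "2 * Suc m + 1 = Suc (Suc (2*m + 1))"
    and exponent: "2 * Suc (Suc (2*m + 1)) - 1 = (2 * (2*m + 1) - 1) + 4"
    by simp_all
  have reals: "real (2*m + 1) = 2*x + 1" "real (3*m + 2) = 3*x + 2"
    by (simp_all add: x_def)
  have "x \<ge> 0" "F6 > 0" "F2 > 0" "F4 > 0" "A_num (2*m + 1) > 0"
    by (simp_all add: x_def F6_def F2_def F4_def A_num_pos)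
  then have "3*x + 2 \<noteq> 0" "4*x + 3 \<noteq> 0" "4*x + 4 \<noteq> 0" "4*x + 5 \<noteq> 0" "6*x + 4 \<noteq> 0"
      "6*x + 5 \<noteq> 0" "6*x + 6 \<noteq> 0" "6*x + 7 \<noteq> 0" "2*x + 2 \<noteq> 0"
      "F6 \<noteq> 0" "F2 \<noteq> 0" "F4 \<noteq> 0" "A_num (2*m + 1) \<noteq> 0"
    by linarith+
  with \<open>x \<ge> 0\<close> show ?thesis
    unfolding AV_A_quotient_def step_ratio_def index exponent A_num_Suc AV_odd_Suc facts reals
      F2_def[symmetric] F4_def[symmetric] F6_def[symmetric] power_add
    by (simp add: divide_simps power2_eq_square) (rule disjI2, algebra)
qed

lemma F_per_at_two_odd: "F_per (2*m + 1) 2 = AV_A_quotient m"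
proof (induction m)
  case 0
  show ?case
    by (simp add: F_per_def AV_A_quotient_def A_num_def AV_odd_def)
next
  case (Suc m)
  have "2 * Suc m + 1 = (2*m + 1) + 2"
    by simp
  then show ?case
    using Suc by (simp only: F_per_at_two_step AV_A_quotient_Suc)
qed

lemma half_power_times_power:
  assumes "n \<ge> 1"
  shows "(1/2 :: real) ^ (n + 1) * 2 ^ (2*n - 1) = 2 powr (real n - 2)"
proof -
  obtain N where n: "n = Suc N"
    using assms by (cases n) auto
  have "(2 :: real) powr (real n - 2) = 2 ^ N / 2"
    unfolding n by (simp add: powr_diff powr_realpow)
  moreover have "(1/2 :: real) ^ (n + 1) * 2 ^ (2*n - 1) = 2 ^ N / 2"
  proof -
    have "2*n - 1 = N + N + 1" "n + 1 = N + 2"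
      using n by simp_all
    then show ?thesis
      by (simp only: power_add power_one_over) simp
  qed
  ultimately show ?thesis
    by simp
qed

theorem mainTheorem5:
  fixes n :: nat
  assumes "n \<ge> 1"
  shows "F_per n 2 = fact (2*n) / (2 * fact n) *
            (3 * Gamma (real n / 2 + 1) / Gamma (3 * real n / 2 + 1))
       \<and> F_per n (1/2) = (1/2) ^ (n + 1) * (fact (2*n) / (2 * fact n) *
            (3 * Gamma (real n / 2 + 1) / Gamma (3 * real n / 2 + 1)))
       \<and> (\<forall>m. n = 2*m + 1 \<longrightarrow>
            F_per n 2 = 2 ^ (2*n - 1) * (AV_odd m)^2 / A_num n
          \<and> F_per n (1/2) = 2 powr (real n - 2) * (AV_odd m)^2 / A_num n)"
proof -
  have two: "F_per n 2 = gamma_closed_form n"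
    by (rule F_per_at_two[OF assms])
  have half: "F_per n (1/2) = (1/2) ^ (n + 1) * F_per n 2"
    using F_per_inverse[OF assms, of 2] by simp
  have "F_per n (1/2) = 2 powr (real n - 2) * (AV_odd m)^2 / A_num n"
    and "F_per n 2 = 2 ^ (2*n - 1) * (AV_odd m)^2 / A_num n" if "n = 2*m + 1" for m
    using F_per_at_two_odd[of m] half half_power_times_power[OF assms] that
    by (simp_all add: AV_A_quotient_def)
  with two half show ?thesis
    by (simp add: gamma_closed_form_def)
qed

end
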